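(* The function $\beta\mapsto\lambda_1(\beta)$ is non-increasing on $(0,\tfrac12)$, and for every $\beta\in(0,\tfrac12)$, $$\frac{(1-2\beta)^2}{\beta^2+(1-\beta)^2}\le\lambda_1(\beta)\le\frac{1-2\beta}{1-\beta}.$$
   Context: Tree: for an integer $m\ge2$, the regular $m$-branching tree $\mathbb{T}_m$ has as vertices the root $\emptyset$ and all finite sequences $(\emptyset,a_1,\dots,a_k)$, $k\in\mathbb{N}$, $a_i\in\{0,\dots,m-1\}$. The level of $x=(\emptyset,a_1,\dots,a_k)$ is $|x|=k$ ($|\emptyset|=0$). The successors of $x$ are $(x,i)$; for $x\ne\emptyset$, $\hat x$ denotes its immediate predecessor. Operator: for $\beta\in[0,1)$ let $p_\beta=1$ if $\beta=0$ and $p_\beta=\beta/(1-\beta)$ if $\beta\in(0,1)$. For $u:\mathbb{T}_m\to\mathbb{R}$, $\Delta_\beta u(\emptyset)=\frac1m\sum_{i=0}^{m-1}u(\emptyset,i)-u(\emptyset)$ and, for $x\ne\emptyset$, $\Delta_\beta u(x)=\big(\beta u(\hat x)+\frac{1-\beta}{m}\sum_{i=0}^{m-1}u(x,i)-u(x)\big)p_\beta^{-|x|}$. $\mathcal{A}_\beta=\{\lambda>0:\exists v:\mathbb{T}_m\to\mathbb{R}\text{ and constants }0<c<C\text{ with } c<v<C \text{ on }\mathbb{T}_m \text{ and } \Delta_\beta v+\lambda v\le0 \text{ on }\mathbb{T}_m\}$, and $\lambda_1(\beta)=\sup\mathcal{A}_\beta$. *)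

theory Defs
  imports "HOL-Analysis.Analysis" "HOL-Library.Extended_Real"
begin

text \<open>Vertices of the regular m-branching tree: the root is the empty list [],
  the vertex (root,a1,...,ak) is the list [a1,...,ak] with all ai < m.
  Successors of x are x @ [i]; the predecessor of a non-root x is butlast x;
  the level of x is length x.\<close>

definition tree :: "nat \<Rightarrow> nat list set" where
  "tree m = {xs. \<forall>a\<in>set xs. a < m}"

definition p_beta :: "real \<Rightarrow> real" where
  "p_beta \<beta> = (if \<beta> = 0 then 1 else \<beta> / (1 - \<beta>))"

definition Delta :: "nat \<Rightarrow> real \<Rightarrow> (nat list \<Rightarrow> real) \<Rightarrow> nat list \<Rightarrow> real" where
  "Delta m \<beta> u x =
     (if x = [] then (1 / real m) * (\<Sum>i<m. u [i]) - u []
      else (\<beta> * u (butlast x) + ((1 - \<beta>) / real m) * (\<Sum>i<m. u (x @ [i])) - u x)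
           / (p_beta \<beta>) ^ length x)"

definition A_beta :: "nat \<Rightarrow> real \<Rightarrow> real set" where
  "A_beta m \<beta> = {l. l > 0 \<and> (\<exists>v :: nat list \<Rightarrow> real. \<exists>c C. 0 < c \<and> c < C \<and>
      (\<forall>x\<in>tree m. c < v x \<and> v x < C) \<and>
      (\<forall>x\<in>tree m. Delta m \<beta> v x + l * v x \<le> 0))}"

text \<open>The supremum is taken in the extended reals, so no boundedness or
  nonemptiness of A_beta is presupposed.\<close>
definition lambda1 :: "nat \<Rightarrow> real \<Rightarrow> ereal" where
  "lambda1 m \<beta> = Sup (ereal ` A_beta m \<beta>)"

end

theory Submission
  imports Defs
begin

text \<open>
  Averaging a supersolution over the \<open>m^k\<close> vertices of each level \<open>k\<close> gives one that
  depends on the level only, and such a radial function lifts back to the tree, so membership in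
  \<open>A_beta\<close> reduces to the one-dimensional conditions of \<open>radial_supersolution\<close>. With
  \<open>q = \<beta> / (1 - \<beta>)\<close> these say that the decrements \<open>a n = f n - f (n + 1)\<close> satisfy
  \<open>a 0 \<ge> l f 0\<close> and \<open>a (n + 1) \<ge> q a n + l q^(n+1) f (n + 1) / (1 - \<beta>)\<close>.

  Both coefficients increase with \<open>\<beta>\<close>, which gives monotonicity. Iterating gives
  \<open>a n \<ge> l q^n f 0\<close>, and positivity of \<open>f\<close> forces \<open>l (1 + q + \<dots> + q^(n-1)) < 1\<close> for all \<open>n\<close>,
  whence \<open>l \<le> 1 - q = (1 - 2\<beta>) / (1 - \<beta>)\<close>.

  For the lower bound: \<open>1\<close> and \<open>q\<close> are the roots of the characteristic polynomial of the step
  recurrence, so \<open>h k = (r k + 1) q^k\<close> satisfies it up to the resonant term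
  \<open>- r (1 - 2\<beta>) q^(n+1)\<close>. The choice \<open>r = (1 - 2\<beta>) / (\<beta>\<^sup>2 + (1 - \<beta>)\<^sup>2)\<close> makes
  \<open>h 1 = 1 - T\<close> for \<open>T = r (1 - 2\<beta>)\<close>, and then \<open>1 + D h\<close>, raised at the root, is a radial
  supersolution for \<open>l = T\<close>.
\<close>

definition tree_level :: "nat \<Rightarrow> nat \<Rightarrow> nat list set" where
  "tree_level m k = {xs. set xs \<subseteq> {..<m} \<and> length xs = k}"

lemma finite_tree_level [simp]: "finite (tree_level m k)"
  unfolding tree_level_def by (rule finite_lists_length_eq) simp

lemma card_tree_level: "card (tree_level m k) = m ^ k"
  unfolding tree_level_def using card_lists_length_eq[of "{..<m}" k] by simp

lemma tree_level_0 [simp]: "tree_level m 0 = {[]}"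
  by (auto simp: tree_level_def)

lemma tree_level_subset_tree: "tree_level m k \<subseteq> tree m"
  by (auto simp: tree_level_def tree_def)

lemma tree_level_Suc: "tree_level m (Suc k) = (\<lambda>(x, i). x @ [i]) ` (tree_level m k \<times> {..<m})"
proof (intro equalityI subsetI)
  fix xs assume xs: "xs \<in> tree_level m (Suc k)"
  then have "xs \<noteq> []" by (auto simp: tree_level_def)
  with xs have "xs = butlast xs @ [last xs]" "butlast xs \<in> tree_level m k" "last xs \<in> {..<m}"
    by (auto simp: tree_level_def dest: in_set_butlastD last_in_set)
  then show "xs \<in> (\<lambda>(x, i). x @ [i]) ` (tree_level m k \<times> {..<m})" by force
qed (auto simp: tree_level_def)

lemma sum_tree_level_Suc:
  "(\<Sum>x\<in>tree_level m (Suc k). u x) = (\<Sum>x\<in>tree_level m k. \<Sum>i<m. u (x @ [i]))"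
proof -
  have "inj_on (\<lambda>(x, i). x @ [i]) (tree_level m k \<times> {..<m})" by (auto simp: inj_on_def)
  then show ?thesis
    by (simp add: tree_level_Suc sum.reindex sum.cartesian_product case_prod_beta')
qed

lemma sum_tree_level_butlast:
  "(\<Sum>x\<in>tree_level m (Suc k). u (butlast x)) = real m * (\<Sum>x\<in>tree_level m k. u x)"
  by (simp add: sum_tree_level_Suc sum_distrib_left)

definition tree_level_mean :: "nat \<Rightarrow> (nat list \<Rightarrow> real) \<Rightarrow> nat \<Rightarrow> real" where
  "tree_level_mean m u k = (\<Sum>x\<in>tree_level m k. u x) / real m ^ k"

lemma tree_level_mean_0 [simp]: "tree_level_mean m u 0 = u []"
  by (simp add: tree_level_mean_def)

lemma tree_level_mean_1: "tree_level_mean m u 1 = (1 / real m) * (\<Sum>i<m. u [i])"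
  using sum_tree_level_Suc[where k = 0 and u = u] by (simp add: tree_level_mean_def)

lemma tree_level_mean_bounds:
  assumes "0 < m" and bounds: "\<forall>x\<in>tree m. c < u x \<and> u x < C"
  shows "c < tree_level_mean m u k \<and> tree_level_mean m u k < C"
proof -
  have ne: "tree_level m k \<noteq> {}" using card_tree_level[of m k] assms(1) by auto
  have "u x \<in> {c<..<C}" if "x \<in> tree_level m k" for x
    using bounds tree_level_subset_tree that by auto
  then have "(\<Sum>x\<in>tree_level m k. c) < (\<Sum>x\<in>tree_level m k. u x)"
    "(\<Sum>x\<in>tree_level m k. u x) < (\<Sum>x\<in>tree_level m k. C)"
    using sum_strict_mono[OF finite_tree_level ne, of "\<lambda>_. c" u]
      sum_strict_mono[OF finite_tree_level ne, of u "\<lambda>_. C"] by auto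
  then show ?thesis using assms(1) by (simp add: card_tree_level tree_level_mean_def field_simps)
qed

lemma tree_level_mean_step:
  assumes "0 < m"
    and "\<And>x. x \<in> tree_level m (Suc n) \<Longrightarrow>
      \<beta> * u (butlast x) + ((1 - \<beta>) / real m) * (\<Sum>i<m. u (x @ [i])) - u x + a * u x \<le> 0"
  shows "\<beta> * tree_level_mean m u n + (1 - \<beta>) * tree_level_mean m u (Suc (Suc n))
    - tree_level_mean m u (Suc n) + a * tree_level_mean m u (Suc n) \<le> 0"
proof -
  define S where "S k = (\<Sum>x\<in>tree_level m k. u x)" for k
  have "(\<Sum>x\<in>tree_level m (Suc n).
      \<beta> * u (butlast x) + ((1 - \<beta>) / real m) * (\<Sum>i<m. u (x @ [i])) - u x + a * u x) \<le> 0"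
    using assms(2) by (rule sum_nonpos)
  also have "(\<Sum>x\<in>tree_level m (Suc n).
      \<beta> * u (butlast x) + ((1 - \<beta>) / real m) * (\<Sum>i<m. u (x @ [i])) - u x + a * u x)
    = \<beta> * real m * S n + ((1 - \<beta>) / real m) * S (Suc (Suc n)) - S (Suc n) + a * S (Suc n)"
    by (simp add: S_def sum.distrib sum_subtractf sum_distrib_left[symmetric]
        sum_divide_distrib[symmetric] sum_tree_level_butlast sum_tree_level_Suc[where k = "Suc n"])
  also have "\<dots> = real m ^ Suc n * (\<beta> * tree_level_mean m u n
      + (1 - \<beta>) * tree_level_mean m u (Suc (Suc n)) - tree_level_mean m u (Suc n)
      + a * tree_level_mean m u (Suc n))"
    using assms(1) by (simp add: S_def tree_level_mean_def field_simps)
  finally show ?thesis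
    using assms(1) by (metis mult_le_cancel_left_pos mult_zero_right of_nat_0_less_iff zero_less_power)
qed

lemma Delta_root_le_iff:
  "Delta m \<beta> u [] + l * u [] \<le> 0 \<longleftrightarrow> (1 / real m) * (\<Sum>i<m. u [i]) \<le> (1 - l) * u []"
  by (auto simp: Delta_def algebra_simps)

lemma Delta_nonroot_le_iff:
  assumes "0 < \<beta>" "\<beta> < 1" "x \<noteq> []"
  shows "Delta m \<beta> u x + l * u x \<le> 0 \<longleftrightarrow>
    \<beta> * u (butlast x) + ((1 - \<beta>) / real m) * (\<Sum>i<m. u (x @ [i])) - u x
      + l * (\<beta> / (1 - \<beta>)) ^ length x * u x \<le> 0"
proof -
  define P where "P = (\<beta> / (1 - \<beta>)) ^ length x"
  have "P > 0" using assms by (simp add: P_def)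
  moreover have "Delta m \<beta> u x + l * u x =
    (\<beta> * u (butlast x) + ((1 - \<beta>) / real m) * (\<Sum>i<m. u (x @ [i])) - u x + l * P * u x) / P"
    using assms \<open>P > 0\<close> by (simp add: Delta_def p_beta_def P_def add_divide_distrib)
  ultimately show ?thesis by (simp add: P_def divide_le_0_iff)
qed

text \<open>For \<open>v x = f (length x)\<close>, the root condition is \<open>Delta m \<beta> v [] + l v [] \<le> 0\<close> and the
  last one is \<open>Delta m \<beta> v x + l v x \<le> 0\<close> on level \<open>n + 1\<close>, multiplied by \<open>p_beta \<beta> ^ (n + 1)\<close>.\<close>

definition radial_supersolution :: "real \<Rightarrow> real \<Rightarrow> (nat \<Rightarrow> real) \<Rightarrow> bool" where
  "radial_supersolution \<beta> l f \<longleftrightarrow>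
     (\<exists>c C. 0 < c \<and> (\<forall>k. c < f k \<and> f k < C)) \<and>
     f 1 \<le> (1 - l) * f 0 \<and>
     (\<forall>n. \<beta> * f n + (1 - \<beta>) * f (Suc (Suc n)) - f (Suc n)
          + l * (\<beta> / (1 - \<beta>)) ^ Suc n * f (Suc n) \<le> 0)"

lemma A_beta_if_radial_supersolution:
  assumes "0 < \<beta>" "\<beta> < 1" "0 < m" "0 < l" "radial_supersolution \<beta> l f"
  shows "l \<in> A_beta m \<beta>"
proof -
  obtain c C where bounds: "0 < c" "\<forall>k. c < f k \<and> f k < C"
    and root: "f 1 \<le> (1 - l) * f 0"
    and step: "\<forall>n. \<beta> * f n + (1 - \<beta>) * f (Suc (Suc n)) - f (Suc n)
                  + l * (\<beta> / (1 - \<beta>)) ^ Suc n * f (Suc n) \<le> 0"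
    using assms(5) unfolding radial_supersolution_def by blast
  define v where "v x = f (length x)" for x :: "nat list"
  have "Delta m \<beta> v x + l * v x \<le> 0" for x
  proof (cases x rule: rev_cases)
    case Nil
    then show ?thesis unfolding Nil Delta_root_le_iff using root assms(3) by (simp add: v_def)
  next
    case (snoc y a)
    have "y @ [a] \<noteq> []" by simp
    then show ?thesis unfolding snoc Delta_nonroot_le_iff[OF assms(1,2) \<open>y @ [a] \<noteq> []\<close>]
      using step[rule_format, of "length y"] assms(3) by (simp add: v_def)
  qed
  moreover have "\<forall>x\<in>tree m. c < v x \<and> v x < C" using bounds by (simp add: v_def)
  moreover have "c < C" using bounds(2)[rule_format, of 0] by linarith
  ultimately show ?thesis unfolding A_beta_def using bounds(1) assms(4) by blast
qed

lemma radial_supersolution_if_A_beta: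
  assumes "0 < \<beta>" "\<beta> < 1" "0 < m" "l \<in> A_beta m \<beta>"
  shows "\<exists>f. radial_supersolution \<beta> l f"
proof -
  obtain v c C where "0 < c" and bounds: "\<forall>x\<in>tree m. c < v x \<and> v x < C"
    and super: "\<forall>x\<in>tree m. Delta m \<beta> v x + l * v x \<le> 0"
    using assms(4) unfolding A_beta_def by blast
  define f where "f = tree_level_mean m v"
  have "c < f k \<and> f k < C" for k
    unfolding f_def by (rule tree_level_mean_bounds[OF assms(3) bounds])
  moreover have "f 1 \<le> (1 - l) * f 0"
  proof -
    have "[] \<in> tree m" by (simp add: tree_def)
    with super have "Delta m \<beta> v [] + l * v [] \<le> 0" by blast
    then show ?thesis unfolding Delta_root_le_iff using tree_level_mean_1[of m v] by (simp add: f_def)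
  qed
  moreover have "\<beta> * f n + (1 - \<beta>) * f (Suc (Suc n)) - f (Suc n)
                  + l * (\<beta> / (1 - \<beta>)) ^ Suc n * f (Suc n) \<le> 0" for n
    unfolding f_def
  proof (rule tree_level_mean_step[OF assms(3)])
    fix x assume x: "x \<in> tree_level m (Suc n)"
    then have "x \<noteq> []" "length x = Suc n" by (auto simp: tree_level_def)
    have "Delta m \<beta> v x + l * v x \<le> 0" using super tree_level_subset_tree x by blast
    then show "\<beta> * v (butlast x) + ((1 - \<beta>) / real m) * (\<Sum>i<m. v (x @ [i])) - v x
        + l * (\<beta> / (1 - \<beta>)) ^ Suc n * v x \<le> 0"
      unfolding Delta_nonroot_le_iff[OF assms(1,2) \<open>x \<noteq> []\<close>] \<open>length x = Suc n\<close> .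
  qed
  ultimately show ?thesis unfolding radial_supersolution_def using \<open>0 < c\<close> by blast
qed

lemma A_beta_iff_radial_supersolution:
  assumes "0 < \<beta>" "\<beta> < 1" "0 < m"
  shows "l \<in> A_beta m \<beta> \<longleftrightarrow> 0 < l \<and> (\<exists>f. radial_supersolution \<beta> l f)"
proof -
  have "l \<in> A_beta m \<beta> \<Longrightarrow> 0 < l" by (simp add: A_beta_def)
  then show ?thesis
    using A_beta_if_radial_supersolution[OF assms] radial_supersolution_if_A_beta[OF assms] by blast
qed

lemma radial_step_iff:
  fixes a b c P :: real
  assumes "\<beta> < 1"
  shows "\<beta> * a + (1 - \<beta>) * c - b + l * P * b \<le> 0
    \<longleftrightarrow> \<beta> / (1 - \<beta>) * (a - b) + l * P * b / (1 - \<beta>) \<le> b - c"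
proof -
  have "1 - \<beta> \<noteq> 0" using assms by simp
  have "\<beta> * a + (1 - \<beta>) * c - b + l * P * b
      = (1 - \<beta>) * (\<beta> / (1 - \<beta>) * (a - b) + l * P * b / (1 - \<beta>) - (b - c))"
    using \<open>1 - \<beta> \<noteq> 0\<close>
    by (simp add: right_diff_distrib distrib_left) (simp add: algebra_simps)
  then show ?thesis using assms by (simp add: mult_le_0_iff)
qed

lemma radial_supersolution_pos:
  "radial_supersolution \<beta> l f \<Longrightarrow> 0 < f k"
  unfolding radial_supersolution_def by (meson less_trans)

lemma radial_supersolution_decrement:
  assumes "0 < \<beta>" "\<beta> < 1" "0 \<le> l" and f: "radial_supersolution \<beta> l f"
  shows "l * (\<beta> / (1 - \<beta>)) ^ n * f 0 \<le> f n - f (Suc n)"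
proof (induction n)
  case 0
  then show ?case using f by (simp add: radial_supersolution_def algebra_simps)
next
  case (Suc n)
  define q where "q = \<beta> / (1 - \<beta>)"
  have "q > 0" using assms(1,2) by (simp add: q_def)
  have "0 \<le> l * q ^ Suc n * f (Suc n) / (1 - \<beta>)"
    using assms(2,3) \<open>q > 0\<close> radial_supersolution_pos[OF f, of "Suc n"] by simp
  moreover have "q * (f n - f (Suc n)) + l * q ^ Suc n * f (Suc n) / (1 - \<beta>)
      \<le> f (Suc n) - f (Suc (Suc n))"
    using f assms(2) unfolding q_def radial_step_iff[OF assms(2), symmetric]
    by (simp add: radial_supersolution_def)
  moreover have "l * q ^ Suc n * f 0 \<le> q * (f n - f (Suc n))"
    using mult_left_mono[OF Suc.IH, of q] \<open>q > 0\<close> by (simp add: q_def algebra_simps)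
  ultimately show ?case by (simp add: q_def)
qed

lemma radial_supersolution_decreasing:
  assumes "0 < \<beta>" "\<beta> < 1" "0 \<le> l" and f: "radial_supersolution \<beta> l f"
  shows "f (Suc n) \<le> f n"
proof -
  have "0 \<le> l * (\<beta> / (1 - \<beta>)) ^ n * f 0"
    using assms(1-3) radial_supersolution_pos[OF f, of 0] by simp
  then show ?thesis using radial_supersolution_decrement[OF assms, of n] by linarith
qed

lemma radial_supersolution_le:
  assumes "0 < \<beta>" "\<beta> < 1/2" "0 \<le> l" and f: "radial_supersolution \<beta> l f"
  shows "l \<le> (1 - 2 * \<beta>) / (1 - \<beta>)"
proof -
  define q where "q = \<beta> / (1 - \<beta>)"
  have "0 < q" "q < 1" using assms(1,2) by (auto simp: q_def field_simps)
  have "l * (1 - q ^ n) \<le> 1 - q" for n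
  proof -
    have "l * f 0 * (\<Sum>j<n. q ^ j) \<le> (\<Sum>j<n. f j - f (Suc j))"
      unfolding sum_distrib_left
      using radial_supersolution_decrement[OF assms(1) _ assms(3) f] assms(2)
      by (intro sum_mono) (simp add: q_def algebra_simps)
    also have "\<dots> < f 0"
      using radial_supersolution_pos[OF f, of n] by (simp add: sum_lessThan_telescope')
    finally have "l * (\<Sum>j<n. q ^ j) < 1"
      using radial_supersolution_pos[OF f, of 0] by (simp add: mult.commute mult.left_commute)
    then show ?thesis using \<open>q < 1\<close> by (simp add: sum_gp_strict field_simps)
  qed
  moreover have "(\<lambda>n. l * (1 - q ^ n)) \<longlonglongrightarrow> l * (1 - 0)"
    using \<open>0 < q\<close> \<open>q < 1\<close> by (intro tendsto_intros LIMSEQ_power_zero) simp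
  ultimately have "l \<le> 1 - q" by (intro LIMSEQ_le_const2[of _ l]) auto
  then show ?thesis using assms(2) by (simp add: q_def field_simps)
qed

lemma radial_supersolution_antimono:
  assumes "0 < \<beta>\<^sub>1" "\<beta>\<^sub>1 \<le> \<beta>\<^sub>2" "\<beta>\<^sub>2 < 1" "0 \<le> l" and f: "radial_supersolution \<beta>\<^sub>2 l f"
  shows "radial_supersolution \<beta>\<^sub>1 l f"
proof -
  define q\<^sub>1 q\<^sub>2 where "q\<^sub>1 = \<beta>\<^sub>1 / (1 - \<beta>\<^sub>1)" and "q\<^sub>2 = \<beta>\<^sub>2 / (1 - \<beta>\<^sub>2)"
  have "0 < q\<^sub>1" "q\<^sub>1 \<le> q\<^sub>2" "1 / (1 - \<beta>\<^sub>1) \<le> 1 / (1 - \<beta>\<^sub>2)"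
    using assms(1-3) by (auto simp: q\<^sub>1_def q\<^sub>2_def frac_le divide_right_mono)
  have "q\<^sub>1 * (f n - f (Suc n)) + l * q\<^sub>1 ^ Suc n * f (Suc n) / (1 - \<beta>\<^sub>1)
      \<le> f (Suc n) - f (Suc (Suc n))" for n
  proof -
    have "0 \<le> f n - f (Suc n)"
      using radial_supersolution_decreasing[OF _ assms(3,4) f, of n] assms(1,2) by simp
    then have "q\<^sub>1 * (f n - f (Suc n)) \<le> q\<^sub>2 * (f n - f (Suc n))"
      by (rule mult_right_mono[OF \<open>q\<^sub>1 \<le> q\<^sub>2\<close>])
    moreover have "q\<^sub>1 ^ Suc n * (1 / (1 - \<beta>\<^sub>1)) \<le> q\<^sub>2 ^ Suc n * (1 / (1 - \<beta>\<^sub>2))"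
      using \<open>0 < q\<^sub>1\<close> \<open>q\<^sub>1 \<le> q\<^sub>2\<close> \<open>1 / (1 - \<beta>\<^sub>1) \<le> 1 / (1 - \<beta>\<^sub>2)\<close> assms(2,3)
      by (intro mult_mono power_mono) auto
    then have "l * f (Suc n) * (q\<^sub>1 ^ Suc n * (1 / (1 - \<beta>\<^sub>1)))
        \<le> l * f (Suc n) * (q\<^sub>2 ^ Suc n * (1 / (1 - \<beta>\<^sub>2)))"
      by (rule mult_left_mono) (use assms(4) radial_supersolution_pos[OF f, of "Suc n"] in simp)
    then have "l * q\<^sub>1 ^ Suc n * f (Suc n) / (1 - \<beta>\<^sub>1) \<le> l * q\<^sub>2 ^ Suc n * f (Suc n) / (1 - \<beta>\<^sub>2)"
      by (simp add: mult_ac)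
    moreover have "q\<^sub>2 * (f n - f (Suc n)) + l * q\<^sub>2 ^ Suc n * f (Suc n) / (1 - \<beta>\<^sub>2)
        \<le> f (Suc n) - f (Suc (Suc n))"
      using f unfolding q\<^sub>2_def radial_step_iff[OF assms(3), symmetric]
      by (simp add: radial_supersolution_def)
    ultimately show ?thesis by linarith
  qed
  then show ?thesis
    using f assms(1-3) unfolding radial_supersolution_def q\<^sub>1_def
    by (simp only: radial_step_iff) auto
qed

lemma A_beta_antimono:
  assumes "0 < \<beta>\<^sub>1" "\<beta>\<^sub>1 \<le> \<beta>\<^sub>2" "\<beta>\<^sub>2 < 1" "0 < m"
  shows "A_beta m \<beta>\<^sub>2 \<subseteq> A_beta m \<beta>\<^sub>1"
proof
  fix l assume "l \<in> A_beta m \<beta>\<^sub>2"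
  then obtain f where "0 < l" "radial_supersolution \<beta>\<^sub>2 l f"
    using assms A_beta_iff_radial_supersolution[of \<beta>\<^sub>2] by auto
  then have "radial_supersolution \<beta>\<^sub>1 l f" by (intro radial_supersolution_antimono[OF assms(1-3)]) auto
  then show "l \<in> A_beta m \<beta>\<^sub>1"
    using assms \<open>0 < l\<close> A_beta_iff_radial_supersolution[of \<beta>\<^sub>1] by auto
qed

lemma A_beta_le:
  assumes "0 < \<beta>" "\<beta> < 1/2" "0 < m" "l \<in> A_beta m \<beta>"
  shows "l \<le> (1 - 2 * \<beta>) / (1 - \<beta>)"
  using assms radial_supersolution_le[OF assms(1,2)]
  by (auto simp: A_beta_iff_radial_supersolution)

lemma profile_step_le:
  fixes h :: "nat \<Rightarrow> real"
  assumes "0 < \<beta>" "\<beta> < 1" "0 < T" "T < 1" "0 < D"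
    and DT: "1 + (1 - \<beta>) / (1 - T) \<le> D * T"
    and h1: "h 1 = 1 - T" and h_le: "\<And>k. 1 \<le> k \<Longrightarrow> h k \<le> 1 - T"
    and h_rec: "\<And>n. \<beta> * h n + (1 - \<beta>) * h (Suc (Suc n)) - h (Suc n) = - T * (\<beta> / (1 - \<beta>)) ^ Suc n"
  defines "f \<equiv> \<lambda>k. 1 + D * h k + (if k = 0 then T / (1 - T) else 0)"
  shows "\<beta> * f n + (1 - \<beta>) * f (Suc (Suc n)) - f (Suc n) + T * (\<beta> / (1 - \<beta>)) ^ Suc n * f (Suc n) \<le> 0"
proof -
  define q where "q = \<beta> / (1 - \<beta>)"
  define G where "G = T / (1 - T)"
  have "0 < q" using assms(1,2) by (simp add: q_def)
  have "\<beta> * f n + (1 - \<beta>) * f (Suc (Suc n)) - f (Suc n)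
      = (if n = 0 then \<beta> * G else 0) + D * (\<beta> * h n + (1 - \<beta>) * h (Suc (Suc n)) - h (Suc n))"
    by (simp add: f_def G_def algebra_simps)
  also have "\<dots> = (if n = 0 then \<beta> * G else 0) - D * T * q ^ Suc n"
    using h_rec[of n] unfolding q_def by simp
  finally have eq: "\<beta> * f n + (1 - \<beta>) * f (Suc (Suc n)) - f (Suc n) + T * q ^ Suc n * f (Suc n)
      = (if n = 0 then \<beta> * G else 0) + T * q ^ Suc n * (1 - D * (1 - h (Suc n)))"
    by (simp add: f_def algebra_simps)
  show ?thesis
  proof (cases n)
    case 0
    have "1 - D * T \<le> - ((1 - \<beta>) / (1 - T))" using DT by linarith
    then have "T * q * (1 - D * T) \<le> T * q * (- ((1 - \<beta>) / (1 - T)))"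
      using assms(3) \<open>0 < q\<close> by (intro mult_left_mono) auto
    also have "\<dots> = - \<beta> * G" using assms(2) by (simp add: q_def G_def)
    finally show ?thesis using eq h1 0 by (simp add: q_def)
  next
    case (Suc k)
    have "1 + (1 - \<beta>) / (1 - T) \<ge> 1" using assms(2,4) by simp
    moreover have "D * T \<le> D * (1 - h (Suc n))" using h_le[of "Suc n"] \<open>0 < D\<close> by simp
    ultimately have "1 \<le> D * (1 - h (Suc n))" using DT by linarith
    then have "T * q ^ Suc n * (1 - D * (1 - h (Suc n))) \<le> 0"
      using assms(3) \<open>0 < q\<close> by (simp add: mult_nonneg_nonpos)
    then show ?thesis using eq Suc by (simp add: q_def)
  qed
qed

lemma radial_supersolution_of_profile:
  fixes h :: "nat \<Rightarrow> real"
  assumes "0 < \<beta>" "\<beta> < 1" "0 < T" "T < 1"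
    and h0: "h 0 = 1" and h1: "h 1 = 1 - T" and h_bounds: "\<And>k. 1 \<le> k \<Longrightarrow> 0 \<le> h k \<and> h k \<le> 1 - T"
    and h_rec: "\<And>n. \<beta> * h n + (1 - \<beta>) * h (Suc (Suc n)) - h (Suc n) = - T * (\<beta> / (1 - \<beta>)) ^ Suc n"
  shows "\<exists>f. radial_supersolution \<beta> T f"
proof -
  \<comment> \<open>\<open>G\<close> makes the root condition an equality, \<open>D\<close> the step condition at \<open>n = 0\<close>.\<close>
  define G where "G = T / (1 - T)"
  define D where "D = (1 + (1 - \<beta>) / (1 - T)) / T"
  define f where "f k = 1 + D * h k + (if k = 0 then G else 0)" for k
  have "0 < G" using assms(3,4) by (simp add: G_def)
  have "0 < D" unfolding D_def using assms(2-4) by (intro divide_pos_pos add_pos_pos) auto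
  have "1/2 < f k \<and> f k < 2 + D + G" for k
  proof -
    have "0 \<le> h k \<and> h k \<le> 1" using h0 h_bounds[of k] assms(3) by (cases "k = 0") auto
    then have "0 \<le> D * h k \<and> D * h k \<le> D" using \<open>0 < D\<close> by (simp add: mult_left_le)
    then show ?thesis using \<open>0 < G\<close> by (cases "k = 0") (simp_all add: f_def)
  qed
  moreover have "f 1 \<le> (1 - T) * f 0"
  proof -
    have "(1 - T) * G = T" using assms(4) by (simp add: G_def)
    then have "(1 - T) * (1 + D + G) = 1 + D * (1 - T)" by (simp add: algebra_simps)
    then show ?thesis using h0 h1 by (simp add: f_def)
  qed
  moreover have "\<beta> * f n + (1 - \<beta>) * f (Suc (Suc n)) - f (Suc n)
      + T * (\<beta> / (1 - \<beta>)) ^ Suc n * f (Suc n) \<le> 0" for n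
    unfolding f_def G_def
    by (rule profile_step_le[OF assms(1-4) \<open>0 < D\<close> _ h1 _ h_rec])
      (use assms(3) h_bounds in \<open>simp_all add: D_def\<close>)
  ultimately have "radial_supersolution \<beta> T f"
    unfolding radial_supersolution_def
    by (intro conjI exI[of _ "1/2"] exI[of _ "2 + D + G"]) auto
  then show ?thesis by blast
qed

lemma linear_geometric_profile_rec:
  fixes \<beta> q r :: real
  assumes "(1 - \<beta>) * q = \<beta>"
  shows "\<beta> * ((r * n + 1) * q ^ n) + (1 - \<beta>) * ((r * Suc (Suc n) + 1) * q ^ Suc (Suc n))
           - (r * Suc n + 1) * q ^ Suc n = - (r * (1 - 2 * \<beta>)) * q ^ Suc n"
proof -
  have "\<beta> * ((r * n + 1) * q ^ n) + (1 - \<beta>) * ((r * Suc (Suc n) + 1) * q ^ Suc (Suc n))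
          - (r * Suc n + 1) * q ^ Suc n + r * (1 - 2 * \<beta>) * q ^ Suc n
      = (r * n + 1) * q ^ n * (\<beta> - (1 - \<beta>) * q)
        + (r * Suc (Suc n) + 1) * q ^ Suc n * ((1 - \<beta>) * q - \<beta>)"
    by (simp add: algebra_simps)
  then show ?thesis using assms by simp
qed

lemma linear_geometric_profile_le:
  fixes q r :: real
  assumes "0 \<le> q" "q < 1" "0 \<le> r" "q * (2 * r + 1) \<le> r + 1" "1 \<le> k"
  shows "(r * k + 1) * q ^ k \<le> (r + 1) * q"
  using assms(5)
proof (induction k rule: dec_induct)
  case base
  then show ?case by simp
next
  case (step k)
  have "q * (r * Suc k + 1) - (r * k + 1) = (q - 1) * r * (real k - 1) + (q * (2 * r + 1) - (r + 1))"
    by (simp add: algebra_simps)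
  moreover have "(q - 1) * r * (real k - 1) \<le> 0"
    using assms(2,3) step(1) by (simp add: mult_nonpos_nonneg mult_le_0_iff)
  ultimately have "q * (r * Suc k + 1) \<le> r * k + 1" using assms(4) by linarith
  then have "q * (r * Suc k + 1) * q ^ k \<le> (r * k + 1) * q ^ k"
    using assms(1) by (simp add: mult_right_mono)
  then show ?case using step.IH by (simp add: mult_ac)
qed

lemma lower_bound_parameters:
  fixes \<beta> :: real
  assumes "0 < \<beta>" "\<beta> < 1/2"
  defines "N \<equiv> \<beta>\<^sup>2 + (1 - \<beta>)\<^sup>2"
  defines "r \<equiv> (1 - 2 * \<beta>) / N" and "q \<equiv> \<beta> / (1 - \<beta>)"
  shows "0 < r" "r * (1 - 2 * \<beta>) < 1" "(r + 1) * q = 1 - r * (1 - 2 * \<beta>)"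
    "q * (2 * r + 1) \<le> r + 1"
proof -
  have "0 < N" using assms(1) by (simp add: N_def add_pos_nonneg)
  then show "0 < r" using assms(2) by (simp add: r_def)
  have N_minus: "N - (1 - 2 * \<beta>)\<^sup>2 = 2 * \<beta> * (1 - \<beta>)"
    by (simp add: N_def power2_eq_square algebra_simps)
  have N_plus: "(1 - 2 * \<beta>) + N = 2 * (1 - \<beta>)\<^sup>2"
    by (simp add: N_def power2_eq_square algebra_simps)
  have rT: "r * (1 - 2 * \<beta>) = (1 - 2 * \<beta>)\<^sup>2 / N" by (simp add: r_def power2_eq_square)
  have "0 < 2 * \<beta> * (1 - \<beta>)" using assms(1,2) by simp
  then show "r * (1 - 2 * \<beta>) < 1" using N_minus \<open>0 < N\<close> by (simp add: rT)
  have "(r + 1) * q = ((1 - 2 * \<beta>) + N) / N * (\<beta> / (1 - \<beta>))"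
    using \<open>0 < N\<close> by (simp add: r_def q_def add_divide_distrib)
  also have "\<dots> = 2 * \<beta> * (1 - \<beta>) / N"
    using assms(2) by (simp add: N_plus power2_eq_square)
  also have "\<dots> = 1 - r * (1 - 2 * \<beta>)"
    using \<open>0 < N\<close> by (simp add: N_minus[symmetric] rT diff_divide_distrib)
  finally show "(r + 1) * q = 1 - r * (1 - 2 * \<beta>)" .
  have "(1 - \<beta>) * ((1 - 2 * \<beta>) + N) - \<beta> * (2 * (1 - 2 * \<beta>) + N) = (1 - 2 * \<beta>)\<^sup>2 * (2 - \<beta>)"
    by (simp add: N_def power2_eq_square algebra_simps)
  moreover have "0 \<le> (1 - 2 * \<beta>)\<^sup>2 * (2 - \<beta>)" using assms(2) by simp
  ultimately have "\<beta> * (2 * (1 - 2 * \<beta>) + N) \<le> (1 - \<beta>) * ((1 - 2 * \<beta>) + N)" by linarith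
  then have "\<beta> * (2 * (1 - 2 * \<beta>) + N) / ((1 - \<beta>) * N)
      \<le> (1 - \<beta>) * ((1 - 2 * \<beta>) + N) / ((1 - \<beta>) * N)"
    by (rule divide_right_mono) (use assms(2) \<open>0 < N\<close> in simp)
  moreover have "q * (2 * r + 1) = \<beta> * (2 * (1 - 2 * \<beta>) + N) / ((1 - \<beta>) * N)"
    using assms(2) \<open>0 < N\<close> by (simp add: r_def q_def field_simps)
  moreover have "r + 1 = (1 - \<beta>) * ((1 - 2 * \<beta>) + N) / ((1 - \<beta>) * N)"
    using assms(2) \<open>0 < N\<close> by (simp add: r_def field_simps)
  ultimately show "q * (2 * r + 1) \<le> r + 1" by simp
qed

lemma lower_bound_mem_A_beta:
  assumes "0 < \<beta>" "\<beta> < 1/2" "0 < m"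
  shows "(1 - 2 * \<beta>)\<^sup>2 / (\<beta>\<^sup>2 + (1 - \<beta>)\<^sup>2) \<in> A_beta m \<beta>"
proof -
  define r where "r = (1 - 2 * \<beta>) / (\<beta>\<^sup>2 + (1 - \<beta>)\<^sup>2)"
  define q where "q = \<beta> / (1 - \<beta>)"
  define T where "T = r * (1 - 2 * \<beta>)"
  define h where "h k = (r * k + 1) * q ^ k" for k
  note params = lower_bound_parameters[OF assms(1,2), folded r_def q_def, folded T_def]
  have "0 < q" "q < 1" using assms(1,2) by (auto simp: q_def field_simps)
  have "0 < T" using params(1) assms(2) by (simp add: T_def)
  have "\<exists>f. radial_supersolution \<beta> T f"
  proof (rule radial_supersolution_of_profile[where h = h])
    show "\<beta> * h n + (1 - \<beta>) * h (Suc (Suc n)) - h (Suc n) = - T * (\<beta> / (1 - \<beta>)) ^ Suc n" for n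
      using linear_geometric_profile_rec[where r = r and n = n, of \<beta> q] assms(2)
      unfolding h_def q_def[symmetric] T_def by (simp add: q_def)
    show "0 \<le> h k \<and> h k \<le> 1 - T" if "1 \<le> k" for k
      using linear_geometric_profile_le[OF _ \<open>q < 1\<close> _ params(4) that] params(1,3) \<open>0 < q\<close>
      by (simp add: h_def)
  qed (use assms(1,2) \<open>0 < T\<close> params(2,3) in \<open>simp_all add: h_def\<close>)
  then obtain f where "radial_supersolution \<beta> T f" ..
  then have "T \<in> A_beta m \<beta>"
    using A_beta_if_radial_supersolution assms \<open>0 < T\<close> by simp
  then show ?thesis by (simp add: T_def r_def power2_eq_square)
qed

theorem proposition1p3:
  fixes m :: nat
  assumes "m \<ge> 2"
  shows "(\<forall>\<beta>1 \<beta>2. 0 < \<beta>1 \<and> \<beta>1 \<le> \<beta>2 \<and> \<beta>2 < 1/2 \<longrightarrow> lambda1 m \<beta>2 \<le> lambda1 m \<beta>1) \<and>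
         (\<forall>\<beta>::real. 0 < \<beta> \<and> \<beta> < 1/2 \<longrightarrow>
            ereal ((1 - 2*\<beta>)^2 / (\<beta>^2 + (1 - \<beta>)^2)) \<le> lambda1 m \<beta> \<and>
            lambda1 m \<beta> \<le> ereal ((1 - 2*\<beta>) / (1 - \<beta>)))"
proof (intro conjI allI impI)
  have "0 < m" using assms by simp
  fix \<beta>1 \<beta>2 :: real
  assume "0 < \<beta>1 \<and> \<beta>1 \<le> \<beta>2 \<and> \<beta>2 < 1/2"
  then have "A_beta m \<beta>2 \<subseteq> A_beta m \<beta>1" using A_beta_antimono \<open>0 < m\<close> by simp
  then show "lambda1 m \<beta>2 \<le> lambda1 m \<beta>1"
    unfolding lambda1_def by (intro Sup_subset_mono image_mono)
next
  fix \<beta> :: real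
  assume \<beta>: "0 < \<beta> \<and> \<beta> < 1/2"
  have "0 < m" using assms by simp
  then show "ereal ((1 - 2*\<beta>)^2 / (\<beta>^2 + (1 - \<beta>)^2)) \<le> lambda1 m \<beta>"
    unfolding lambda1_def using \<beta> lower_bound_mem_A_beta by (intro Sup_upper imageI) auto
  show "lambda1 m \<beta> \<le> ereal ((1 - 2*\<beta>) / (1 - \<beta>))"
    unfolding lambda1_def using \<beta> A_beta_le \<open>0 < m\<close> by (intro Sup_least) auto
qed

end
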